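(* In the setting of 2D Toom-Cook convolution described in the context, if every dot product in the linear transforms is computed by linear (recursive) summation of the rounded products, with arbitrary matrix entries, then $$|\hat S-S|\le |A^T|\big(|G|\,|H|\,|G^T|\odot|B^T|\,|X|\,|B|\big)|A|\,(2n_h+4n+7)\varepsilon+O(\varepsilon^2)$$ and $$\|\hat S-S\|_1\le \|A^T\|_1\|G\|_F\|H\|_F\|G^T\|_F\|B^T\|_F\|X\|_F\|B\|_F\|A\|_1\,(2n_h+4n+7)\varepsilon+O(\varepsilon^2).$$
   Context: $n=n_o+n_h-1$, $p_1,\dots,p_n$ distinct reals, $N_i=1/\prod_{j\ne i}(p_i-p_j)$, $M_{i,j}$ the coefficient of $a^{j-1}$ in $\prod_{k\ne i}(a-p_k)$; $A^T\in\mathbb{R}^{n_o\times n}$, $A^T_{i,j}=p_j^{i-1}$; $G\in\mathbb{R}^{n\times n_h}$, $G_{i,j}=p_i^{j-1}N_i$; $B^T\in\mathbb{R}^{n\times n}$, $B^T_{i,j}=M_{j,i}$. For $H\in F^{n_h\times n_h}$, $X\in F^{n\times n}$, $S=A^T(GHG^T\odot B^TXB)A$ is exact, and $\hat S$ is computed as $U=fl(fl(G)Hfl(G^T))$, $V=fl(fl(B^T)Xfl(B))$, $W_{ij}=fl(U_{ij}V_{ij})$, $\hat S=fl(fl(A^T)Wfl(A))$. Floating point model: unit roundoff $\varepsilon$, no overflow, each elementary operation and each stored constant incurs relative error at most $\varepsilon$. $\odot$ Hadamard product, $|\cdot|$ entrywise absolute value, $\|\cdot\|_1$ induced matrix 1-norm,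 $\|\cdot\|_F$ Frobenius norm. *)

theory Defs
  imports "HOL-Computational_Algebra.Polynomial" "Jordan_Normal_Form.Matrix"
begin

definition tc_n :: "nat \<Rightarrow> nat \<Rightarrow> nat" where
  "tc_n n_o n_h = n_o + n_h - 1"

definition tc_N :: "nat \<Rightarrow> (nat \<Rightarrow> real) \<Rightarrow> nat \<Rightarrow> real" where
  "tc_N n p i = 1 / (\<Prod>j\<in>{0..<n} - {i}. (p i - p j))"

definition tc_M :: "nat \<Rightarrow> (nat \<Rightarrow> real) \<Rightarrow> nat \<Rightarrow> nat \<Rightarrow> real" where
  "tc_M n p i j = coeff (\<Prod>k\<in>{0..<n} - {i}. [:- p k, 1:]) j"

definition tc_AT :: "nat \<Rightarrow> nat \<Rightarrow> (nat \<Rightarrow> real) \<Rightarrow> real mat" where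
  "tc_AT n_o n_h p = mat n_o (tc_n n_o n_h) (\<lambda>(i,j). p j ^ i)"

definition tc_G :: "nat \<Rightarrow> nat \<Rightarrow> (nat \<Rightarrow> real) \<Rightarrow> real mat" where
  "tc_G n_o n_h p = mat (tc_n n_o n_h) n_h
     (\<lambda>(i,j). p i ^ j * tc_N (tc_n n_o n_h) p i)"

definition tc_BT :: "nat \<Rightarrow> nat \<Rightarrow> (nat \<Rightarrow> real) \<Rightarrow> real mat" where
  "tc_BT n_o n_h p = mat (tc_n n_o n_h) (tc_n n_o n_h)
     (\<lambda>(i,j). tc_M (tc_n n_o n_h) p j i)"

definition hadamard :: "real mat \<Rightarrow> real mat \<Rightarrow> real mat" where
  "hadamard P Q = mat (dim_row P) (dim_col P) (\<lambda>(i,j). P $$ (i,j) * Q $$ (i,j))"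

definition abs_mat :: "real mat \<Rightarrow> real mat" where
  "abs_mat P = map_mat abs P"

definition tc_S :: "nat \<Rightarrow> nat \<Rightarrow> (nat \<Rightarrow> real) \<Rightarrow> real mat \<Rightarrow> real mat \<Rightarrow> real mat" where
  "tc_S n_o n_h p H X =
     (let AT = tc_AT n_o n_h p; G = tc_G n_o n_h p; BT = tc_BT n_o n_h p
      in AT * hadamard (G * H * transpose_mat G) (BT * X * transpose_mat BT) * transpose_mat AT)"

(* Each operation carries a relative error: alpha k for the k-th product,
   beta k for the addition that incorporates the k-th product. *)
fun lin_dot :: "(nat \<Rightarrow> real) \<Rightarrow> (nat \<Rightarrow> real) \<Rightarrow> (nat \<Rightarrow> real) \<Rightarrow> (nat \<Rightarrow> real) \<Rightarrow> nat \<Rightarrow> real" where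
  "lin_dot \<alpha> \<beta> x y 0 = 0"
| "lin_dot \<alpha> \<beta> x y (Suc k) =
     (if k = 0 then x 0 * y 0 * (1 + \<alpha> 0)
      else (lin_dot \<alpha> \<beta> x y k + x k * y k * (1 + \<alpha> k)) * (1 + \<beta> k))"

definition fl_mult :: "(nat \<Rightarrow> nat \<Rightarrow> nat \<Rightarrow> real) \<Rightarrow> (nat \<Rightarrow> nat \<Rightarrow> nat \<Rightarrow> real)
    \<Rightarrow> real mat \<Rightarrow> real mat \<Rightarrow> real mat" where
  "fl_mult da ds P Q = mat (dim_row P) (dim_col Q)
     (\<lambda>(i,j). lin_dot (da i j) (ds i j) (\<lambda>k. P $$ (i,k)) (\<lambda>k. Q $$ (k,j)) (dim_col P))"

(* storing a matrix of (real) constants: each entry gets a relative error *)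
definition fl_store :: "(nat \<Rightarrow> nat \<Rightarrow> real) \<Rightarrow> real mat \<Rightarrow> real mat" where
  "fl_store d P = mat (dim_row P) (dim_col P) (\<lambda>(i,j). P $$ (i,j) * (1 + d i j))"

definition fl_hadamard :: "(nat \<Rightarrow> nat \<Rightarrow> real) \<Rightarrow> real mat \<Rightarrow> real mat \<Rightarrow> real mat" where
  "fl_hadamard d P Q = mat (dim_row P) (dim_col P)
     (\<lambda>(i,j). P $$ (i,j) * Q $$ (i,j) * (1 + d i j))"

(* The computed \<hat>S.  e t i j k is the relative rounding error of the operation with
   tag t (which rounding / product), entry (i,j) and position k. *)
definition tc_Shat :: "nat \<Rightarrow> nat \<Rightarrow> (nat \<Rightarrow> real) \<Rightarrow> real mat \<Rightarrow> real mat
    \<Rightarrow> (nat \<Rightarrow> nat \<Rightarrow> nat \<Rightarrow> nat \<Rightarrow> real) \<Rightarrow> real mat" where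
  "tc_Shat n_o n_h p H X e =
     (let AT = tc_AT n_o n_h p; G = tc_G n_o n_h p; BT = tc_BT n_o n_h p;
          st = (\<lambda>t. (\<lambda>i j. e t i j 0));
          U = fl_mult (e 4) (e 5)
                (fl_mult (e 2) (e 3) (fl_store (st 0) G) H)
                (fl_store (st 1) (transpose_mat G));
          V = fl_mult (e 10) (e 11)
                (fl_mult (e 8) (e 9) (fl_store (st 6) BT) X)
                (fl_store (st 7) (transpose_mat BT));
          W = fl_hadamard (st 12) U V
      in fl_mult (e 17) (e 18)
           (fl_mult (e 15) (e 16) (fl_store (st 13) AT) W)
           (fl_store (st 14) (transpose_mat AT)))"

definition vec_norm1 :: "real vec \<Rightarrow> real" where
  "vec_norm1 x = (\<Sum>i<dim_vec x. \<bar>x $ i\<bar>)"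

definition mat_norm1 :: "real mat \<Rightarrow> real" where
  "mat_norm1 P = Sup {vec_norm1 (P *\<^sub>v x) | x. x \<in> carrier_vec (dim_col P) \<and> vec_norm1 x \<le> 1}"

definition frob :: "real mat \<Rightarrow> real" where
  "frob P = sqrt (\<Sum>i<dim_row P. \<Sum>j<dim_col P. (P $$ (i,j))\<^sup>2)"

end

theory Submission
  imports Defs "HOL-Analysis.L2_Norm"
begin

text \<open>
  Every computed quantity is tracked together with the exact value and with the value obtained by
  replacing all inputs by their absolute values: if the computation of \<open>x\<close> has gone through at
  most \<open>m\<close> roundings \<open>(1 + \<delta>)\<close>, \<open>\<bar>\<delta>\<bar> \<le> \<epsilon>\<close>, along every path, then the computed value differs from
  \<open>x\<close> by at most \<open>s ((1 + \<epsilon>)^m - 1)\<close>, where \<open>s\<close> is the absolute-value computation. This bound is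
  stable under products, sums and further roundings, and a linearly summed dot product of length
  \<open>k\<close> adds \<open>k\<close> roundings. Following the two transforms, the Hadamard product and the output
  transform gives \<open>m = 2n\<^sub>h + 4n + 7\<close>, and \<open>(1 + \<epsilon>)^m - 1 = m\<epsilon> + O(\<epsilon>\<^sup>2)\<close>.
  The norm bound follows from the entrywise one because the induced 1-norm is the largest
  absolute column sum: it is submultiplicative, and a column sum of a Hadamard product is bounded
  by Cauchy-Schwarz in terms of Frobenius norms, which are submultiplicative as well.
\<close>

section \<open>Running error bounds\<close>

definition fl_approx :: "real \<Rightarrow> nat \<Rightarrow> real \<Rightarrow> real \<Rightarrow> real \<Rightarrow> bool" where
  "fl_approx \<epsilon> m y x s \<longleftrightarrow> \<bar>x\<bar> \<le> s \<and> \<bar>y - x\<bar> \<le> s * ((1 + \<epsilon>) ^ m - 1)"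

lemma fl_approx_exact: "fl_approx \<epsilon> 0 x x \<bar>x\<bar>"
  unfolding fl_approx_def by simp

lemma fl_approx_zero: "fl_approx \<epsilon> m 0 0 0"
  unfolding fl_approx_def by simp

lemma fl_approx_mono:
  assumes "0 \<le> \<epsilon>" and "fl_approx \<epsilon> m y x s" and "m \<le> m'"
  shows "fl_approx \<epsilon> m' y x s"
proof -
  have "0 \<le> s" using assms(2) unfolding fl_approx_def by linarith
  moreover have "(1 + \<epsilon>) ^ m \<le> (1 + \<epsilon>) ^ m'"
    using assms by (intro power_increasing) auto
  ultimately have "s * ((1 + \<epsilon>) ^ m - 1) \<le> s * ((1 + \<epsilon>) ^ m' - 1)"
    by (intro mult_left_mono) auto
  then show ?thesis using assms(2) unfolding fl_approx_def by linarith
qed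

lemma fl_approx_add:
  assumes "fl_approx \<epsilon> m y1 x1 s1" and "fl_approx \<epsilon> m y2 x2 s2"
  shows "fl_approx \<epsilon> m (y1 + y2) (x1 + x2) (s1 + s2)"
proof -
  have "\<bar>(y1 + y2) - (x1 + x2)\<bar> \<le> \<bar>y1 - x1\<bar> + \<bar>y2 - x2\<bar>" and "\<bar>x1 + x2\<bar> \<le> \<bar>x1\<bar> + \<bar>x2\<bar>"
    by linarith+
  with assms show ?thesis unfolding fl_approx_def distrib_right by linarith
qed

lemma fl_approx_mult:
  assumes "0 \<le> \<epsilon>" and "fl_approx \<epsilon> a y1 x1 s1" and "fl_approx \<epsilon> b y2 x2 s2"
  shows "fl_approx \<epsilon> (a + b) (y1 * y2) (x1 * x2) (s1 * s2)"
proof -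
  define d1 d2 where "d1 = (1 + \<epsilon>) ^ a - 1" and "d2 = (1 + \<epsilon>) ^ b - 1"
  have "0 \<le> d1" "0 \<le> d2" unfolding d1_def d2_def using assms(1) by (auto simp: one_le_power)
  have x: "\<bar>x1\<bar> \<le> s1" "\<bar>x2\<bar> \<le> s2" and err: "\<bar>y1 - x1\<bar> \<le> s1 * d1" "\<bar>y2 - x2\<bar> \<le> s2 * d2"
    using assms(2,3) unfolding fl_approx_def d1_def d2_def by auto
  have "y1 * y2 - x1 * x2 = x1 * (y2 - x2) + (y1 - x1) * x2 + (y1 - x1) * (y2 - x2)"
    by (simp add: algebra_simps)
  then have "\<bar>y1 * y2 - x1 * x2\<bar>
      \<le> \<bar>x1 * (y2 - x2)\<bar> + \<bar>(y1 - x1) * x2\<bar> + \<bar>(y1 - x1) * (y2 - x2)\<bar>"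
    by linarith
  also have "\<dots> \<le> s1 * (s2 * d2) + (s1 * d1) * s2 + (s1 * d1) * (s2 * d2)"
    unfolding abs_mult using x err \<open>0 \<le> d1\<close> \<open>0 \<le> d2\<close> by (intro add_mono mult_mono) auto
  also have "\<dots> = (s1 * s2) * ((1 + d1) * (1 + d2) - 1)"
    by (simp add: algebra_simps)
  also have "(1 + d1) * (1 + d2) = (1 + \<epsilon>) ^ (a + b)"
    unfolding d1_def d2_def by (simp add: power_add)
  moreover have "\<bar>x1 * x2\<bar> \<le> s1 * s2"
    unfolding abs_mult using x by (intro mult_mono) auto
  ultimately show ?thesis unfolding fl_approx_def by simp
qed

lemma fl_approx_round:
  assumes "0 \<le> \<epsilon>" and "\<bar>\<delta>\<bar> \<le> \<epsilon>" and "fl_approx \<epsilon> m y x s"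
  shows "fl_approx \<epsilon> (Suc m) (y * (1 + \<delta>)) x s"
proof -
  define d where "d = (1 + \<epsilon>) ^ m - 1"
  have "0 \<le> d" unfolding d_def using assms(1) by (auto simp: one_le_power)
  have x: "\<bar>x\<bar> \<le> s" and err: "\<bar>y - x\<bar> \<le> s * d"
    using assms(3) unfolding fl_approx_def d_def by auto
  have "y * (1 + \<delta>) - x = (y - x) * (1 + \<delta>) + x * \<delta>"
    by (simp add: algebra_simps)
  then have "\<bar>y * (1 + \<delta>) - x\<bar> \<le> \<bar>(y - x) * (1 + \<delta>)\<bar> + \<bar>x * \<delta>\<bar>"
    by linarith
  also have "\<dots> \<le> (s * d) * (1 + \<epsilon>) + s * \<epsilon>"
    unfolding abs_mult using x err assms(1,2) by (intro add_mono mult_mono) auto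
  also have "\<dots> = s * ((1 + d) * (1 + \<epsilon>) - 1)"
    by (simp add: algebra_simps)
  also have "(1 + d) * (1 + \<epsilon>) = (1 + \<epsilon>) ^ Suc m"
    unfolding d_def by simp
  finally show ?thesis using x unfolding fl_approx_def by auto
qed

lemma fl_approx_lin_dot:
  assumes "0 \<le> \<epsilon>" and "\<And>k. \<bar>\<alpha> k\<bar> \<le> \<epsilon>" and "\<And>k. \<bar>\<beta> k\<bar> \<le> \<epsilon>"
    and x: "\<And>k. k < r \<Longrightarrow> fl_approx \<epsilon> a (xh k) (x k) (sx k)"
    and y: "\<And>k. k < r \<Longrightarrow> fl_approx \<epsilon> b (yh k) (y k) (sy k)"
    and "k \<le> r"
  shows "fl_approx \<epsilon> (a + b + k) (lin_dot \<alpha> \<beta> xh yh k)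
           (\<Sum>l<k. x l * y l) (\<Sum>l<k. sx l * sy l)"
  using \<open>k \<le> r\<close>
proof (induction k)
  case 0
  then show ?case by (simp add: fl_approx_zero)
next
  case (Suc k)
  then have "k < r" by simp
  have prod_k: "fl_approx \<epsilon> (Suc (a + b)) (xh k * yh k * (1 + \<alpha> k)) (x k * y k) (sx k * sy k)"
    using assms(1,2) fl_approx_mult[OF assms(1) x y] \<open>k < r\<close> by (intro fl_approx_round) auto
  show ?case
  proof (cases "k = 0")
    case True
    with prod_k show ?thesis by simp
  next
    case False
    have "fl_approx \<epsilon> (a + b + k) (lin_dot \<alpha> \<beta> xh yh k + xh k * yh k * (1 + \<alpha> k))
        ((\<Sum>l<k. x l * y l) + x k * y k) ((\<Sum>l<k. sx l * sy l) + sx k * sy k)"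
      using Suc False assms(1) by (intro fl_approx_add fl_approx_mono[OF _ prod_k]) auto
    from fl_approx_round[OF assms(1,3) this] False show ?thesis by simp
  qed
qed

lemma one_add_power_le:
  assumes "0 \<le> \<epsilon>" and "\<epsilon> \<le> (1::real)"
  shows "(1 + \<epsilon>) ^ m \<le> 1 + real m * \<epsilon> + 4 ^ m * \<epsilon>\<^sup>2"
proof (induction m)
  case 0
  then show ?case by simp
next
  case (Suc m)
  have "real m \<le> 4 ^ m"
    using less_exp[of m] power_mono[of 2 4 m] by (simp add: less_imp_le order_trans)
  then have "real m * \<epsilon>\<^sup>2 \<le> 4 ^ m * \<epsilon>\<^sup>2"
    by (rule mult_right_mono) simp
  moreover have "4 ^ m * \<epsilon> ^ 3 \<le> 4 ^ m * \<epsilon>\<^sup>2"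
    using assms by (intro mult_left_mono power_decreasing) auto
  moreover have "0 \<le> 4 ^ m * \<epsilon>\<^sup>2"
    by simp
  ultimately have higher_order:
    "real m * \<epsilon>\<^sup>2 + 4 ^ m * \<epsilon>\<^sup>2 + 4 ^ m * \<epsilon> ^ 3 \<le> 4 ^ Suc m * \<epsilon>\<^sup>2"
    unfolding power_Suc[of 4] by linarith
  have "(1 + \<epsilon>) ^ Suc m \<le> (1 + \<epsilon>) * (1 + real m * \<epsilon> + 4 ^ m * \<epsilon>\<^sup>2)"
    using Suc assms by (simp add: mult_left_mono)
  also have "\<dots> = 1 + real (Suc m) * \<epsilon> + (real m * \<epsilon>\<^sup>2 + 4 ^ m * \<epsilon>\<^sup>2 + 4 ^ m * \<epsilon> ^ 3)"
    by (simp add: algebra_simps power2_eq_square power3_eq_cube)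
  also have "\<dots> \<le> 1 + real (Suc m) * \<epsilon> + 4 ^ Suc m * \<epsilon>\<^sup>2"
    using higher_order by simp
  finally show ?case .
qed

lemma fl_approx_first_order:
  assumes "fl_approx \<epsilon> m y x s" and "0 \<le> \<epsilon>" and "\<epsilon> \<le> 1"
  shows "\<bar>y - x\<bar> \<le> s * (real m * \<epsilon> + 4 ^ m * \<epsilon>\<^sup>2)"
proof -
  have "0 \<le> s" using assms(1) unfolding fl_approx_def by linarith
  then have "s * ((1 + \<epsilon>) ^ m - 1) \<le> s * (real m * \<epsilon> + 4 ^ m * \<epsilon>\<^sup>2)"
    using one_add_power_le[OF assms(2,3), of m] by (intro mult_left_mono) auto
  with assms(1) show ?thesis unfolding fl_approx_def by linarith
qed

section \<open>Running error bounds for matrix computations\<close>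

lemma index_mult_mat_sum:
  assumes "i < dim_row A" and "j < dim_col B" and "dim_col A = dim_row B"
  shows "(A * B) $$ (i, j) = (\<Sum>k<dim_col A. A $$ (i, k) * B $$ (k, j))"
  using assms by (simp add: scalar_prod_def atLeast0LessThan)

definition mat_fl_approx :: "real \<Rightarrow> nat \<Rightarrow> real mat \<Rightarrow> real mat \<Rightarrow> real mat \<Rightarrow> bool" where
  "mat_fl_approx \<epsilon> m Yh Y S \<longleftrightarrow>
     dim_row Yh = dim_row Y \<and> dim_col Yh = dim_col Y \<and> dim_row S = dim_row Y \<and> dim_col S = dim_col Y \<and>
     (\<forall>i<dim_row Y. \<forall>j<dim_col Y. fl_approx \<epsilon> m (Yh $$ (i, j)) (Y $$ (i, j)) (S $$ (i, j)))"

lemma mat_fl_approx_exact: "mat_fl_approx \<epsilon> 0 Y Y (abs_mat Y)"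
  unfolding mat_fl_approx_def abs_mat_def by (auto simp: fl_approx_exact)

lemma mat_fl_approx_fl_store:
  assumes "0 \<le> \<epsilon>" and "\<And>i j. \<bar>d i j\<bar> \<le> \<epsilon>"
  shows "mat_fl_approx \<epsilon> 1 (fl_store d Y) Y (abs_mat Y)"
  unfolding mat_fl_approx_def abs_mat_def fl_store_def
  using fl_approx_round[OF assms fl_approx_exact] by auto

lemma mat_fl_approx_fl_mult:
  assumes "0 \<le> \<epsilon>" and "\<And>i j k. \<bar>da i j k\<bar> \<le> \<epsilon>" and "\<And>i j k. \<bar>ds i j k\<bar> \<le> \<epsilon>"
    and P: "mat_fl_approx \<epsilon> a Ph P SP" and Q: "mat_fl_approx \<epsilon> b Qh Q SQ"
    and PQ: "dim_col P = dim_row Q"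
  shows "mat_fl_approx \<epsilon> (a + b + dim_col P) (fl_mult da ds Ph Qh) (P * Q) (SP * SQ)"
proof -
  have dims: "dim_row Ph = dim_row P" "dim_col Ph = dim_col P" "dim_row SP = dim_row P"
    "dim_col SP = dim_col P" "dim_row Qh = dim_row Q" "dim_col Qh = dim_col Q"
    "dim_row SQ = dim_row Q" "dim_col SQ = dim_col Q"
    using P Q unfolding mat_fl_approx_def by auto
  have "fl_approx \<epsilon> (a + b + dim_col P) (fl_mult da ds Ph Qh $$ (i, j)) ((P * Q) $$ (i, j))
      ((SP * SQ) $$ (i, j))" if i: "i < dim_row P" and j: "j < dim_col Q" for i j
  proof -
    have "fl_approx \<epsilon> (a + b + dim_col P)
        (lin_dot (da i j) (ds i j) (\<lambda>k. Ph $$ (i, k)) (\<lambda>k. Qh $$ (k, j)) (dim_col P))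
        (\<Sum>k<dim_col P. P $$ (i, k) * Q $$ (k, j)) (\<Sum>k<dim_col P. SP $$ (i, k) * SQ $$ (k, j))"
      using P Q i j PQ assms(1-3) unfolding mat_fl_approx_def
      by (intro fl_approx_lin_dot[where r = "dim_col P"]) auto
    moreover have "(P * Q) $$ (i, j) = (\<Sum>k<dim_col P. P $$ (i, k) * Q $$ (k, j))"
      and "(SP * SQ) $$ (i, j) = (\<Sum>k<dim_col P. SP $$ (i, k) * SQ $$ (k, j))"
      using i j PQ dims index_mult_mat_sum[of i P j Q] index_mult_mat_sum[of i SP j SQ] by simp_all
    ultimately show ?thesis
      using i j dims by (simp add: fl_mult_def)
  qed
  then show ?thesis
    using dims unfolding mat_fl_approx_def fl_mult_def by auto
qed

lemma dim_row_abs_mat [simp]: "dim_row (abs_mat P) = dim_row P"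
  and dim_col_abs_mat [simp]: "dim_col (abs_mat P) = dim_col P"
  unfolding abs_mat_def by simp_all

lemma dim_row_hadamard [simp]: "dim_row (hadamard P Q) = dim_row P"
  and dim_col_hadamard [simp]: "dim_col (hadamard P Q) = dim_col P"
  unfolding hadamard_def by simp_all

lemma mat_fl_approx_fl_hadamard:
  assumes "0 \<le> \<epsilon>" and "\<And>i j. \<bar>d i j\<bar> \<le> \<epsilon>"
    and P: "mat_fl_approx \<epsilon> a Ph P SP" and Q: "mat_fl_approx \<epsilon> b Qh Q SQ"
    and "dim_row P = dim_row Q" and "dim_col P = dim_col Q"
  shows "mat_fl_approx \<epsilon> (Suc (a + b)) (fl_hadamard d Ph Qh) (hadamard P Q) (hadamard SP SQ)"
proof -
  have dims: "dim_row Ph = dim_row P" "dim_col Ph = dim_col P" "dim_row SP = dim_row P"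
    "dim_col SP = dim_col P"
    using P unfolding mat_fl_approx_def by auto
  have "fl_approx \<epsilon> (Suc (a + b)) (Ph $$ (i, j) * Qh $$ (i, j) * (1 + d i j))
      (P $$ (i, j) * Q $$ (i, j)) (SP $$ (i, j) * SQ $$ (i, j))"
    if "i < dim_row P" and "j < dim_col P" for i j
    using P Q that assms(1,2,5,6) unfolding mat_fl_approx_def
    by (intro fl_approx_round fl_approx_mult) auto
  then show ?thesis
    using dims unfolding mat_fl_approx_def fl_hadamard_def hadamard_def by auto
qed

lemma mat_fl_approx_fl_sandwich:
  assumes "0 \<le> \<epsilon>" and "\<And>i j. \<bar>d1 i j\<bar> \<le> \<epsilon>" and "\<And>i j. \<bar>d2 i j\<bar> \<le> \<epsilon>"
    and "\<And>i j k. \<bar>da1 i j k\<bar> \<le> \<epsilon>" and "\<And>i j k. \<bar>ds1 i j k\<bar> \<le> \<epsilon>"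
    and "\<And>i j k. \<bar>da2 i j k\<bar> \<le> \<epsilon>" and "\<And>i j k. \<bar>ds2 i j k\<bar> \<le> \<epsilon>"
    and "Y \<in> carrier_mat r k" and "Z \<in> carrier_mat k k" and "mat_fl_approx \<epsilon> w Zh Z SZ"
  shows "mat_fl_approx \<epsilon> (w + 2 * k + 2)
    (fl_mult da2 ds2 (fl_mult da1 ds1 (fl_store d1 Y) Zh) (fl_store d2 (transpose_mat Y)))
    (Y * Z * transpose_mat Y) (abs_mat Y * SZ * abs_mat (transpose_mat Y))"
proof -
  have "mat_fl_approx \<epsilon> (1 + w + dim_col Y) (fl_mult da1 ds1 (fl_store d1 Y) Zh) (Y * Z) (abs_mat Y * SZ)"
    using assms by (intro mat_fl_approx_fl_mult mat_fl_approx_fl_store) auto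
  then have "mat_fl_approx \<epsilon> (1 + w + dim_col Y + 1 + dim_col (Y * Z))
      (fl_mult da2 ds2 (fl_mult da1 ds1 (fl_store d1 Y) Zh) (fl_store d2 (transpose_mat Y)))
      (Y * Z * transpose_mat Y) (abs_mat Y * SZ * abs_mat (transpose_mat Y))"
    using assms by (intro mat_fl_approx_fl_mult mat_fl_approx_fl_store) auto
  moreover have "1 + w + dim_col Y + 1 + dim_col (Y * Z) = w + 2 * k + 2"
    using assms(8,9) by simp
  ultimately show ?thesis
    by metis
qed

lemma tc_AT_carrier: "tc_AT n_o n_h p \<in> carrier_mat n_o (tc_n n_o n_h)"
  unfolding tc_AT_def by simp

lemma tc_G_carrier: "tc_G n_o n_h p \<in> carrier_mat (tc_n n_o n_h) n_h"
  unfolding tc_G_def by simp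

lemma tc_BT_carrier: "tc_BT n_o n_h p \<in> carrier_mat (tc_n n_o n_h) (tc_n n_o n_h)"
  unfolding tc_BT_def by simp

lemma mat_fl_approx_tc_Shat:
  assumes "0 \<le> \<epsilon>" and e: "\<And>t i j k. \<bar>e t i j k\<bar> \<le> \<epsilon>"
    and "H \<in> carrier_mat n_h n_h" and "X \<in> carrier_mat (tc_n n_o n_h) (tc_n n_o n_h)"
  shows "mat_fl_approx \<epsilon> (2 * n_h + 4 * tc_n n_o n_h + 7) (tc_Shat n_o n_h p H X e) (tc_S n_o n_h p H X)
     (abs_mat (tc_AT n_o n_h p) *
        hadamard (abs_mat (tc_G n_o n_h p) * abs_mat H * abs_mat (transpose_mat (tc_G n_o n_h p)))
          (abs_mat (tc_BT n_o n_h p) * abs_mat X * abs_mat (transpose_mat (tc_BT n_o n_h p)))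
        * abs_mat (transpose_mat (tc_AT n_o n_h p)))"
proof -
  define n AT G BT where "n = tc_n n_o n_h" and "AT = tc_AT n_o n_h p"
    and "G = tc_G n_o n_h p" and "BT = tc_BT n_o n_h p"
  have carriers: "AT \<in> carrier_mat n_o n" "G \<in> carrier_mat n n_h" "BT \<in> carrier_mat n n"
    "H \<in> carrier_mat n_h n_h" "X \<in> carrier_mat n n"
    using assms tc_AT_carrier tc_G_carrier tc_BT_carrier unfolding n_def AT_def G_def BT_def by auto
  have sandwich: "mat_fl_approx \<epsilon> m
      (fl_mult (e t4) (e t5) (fl_mult (e t2) (e t3) (fl_store (\<lambda>i j. e t0 i j 0) Y) Zh)
        (fl_store (\<lambda>i j. e t1 i j 0) (transpose_mat Y)))
      (Y * Z * transpose_mat Y) (abs_mat Y * SZ * abs_mat (transpose_mat Y))"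
    if "Y \<in> carrier_mat r k" and "Z \<in> carrier_mat k k" and "mat_fl_approx \<epsilon> w Zh Z SZ"
      and "m = w + 2 * k + 2"
    for m t0 t1 t2 t3 t4 t5 r k w Y Z Zh SZ
    unfolding that(4) using \<open>0 \<le> \<epsilon>\<close> e that(1-3) by (intro mat_fl_approx_fl_sandwich)
  have U: "mat_fl_approx \<epsilon> (2 * n_h + 2)
      (fl_mult (e 4) (e 5) (fl_mult (e 2) (e 3) (fl_store (\<lambda>i j. e 0 i j 0) G) H)
         (fl_store (\<lambda>i j. e 1 i j 0) (transpose_mat G)))
      (G * H * transpose_mat G) (abs_mat G * abs_mat H * abs_mat (transpose_mat G))"
    (is "mat_fl_approx _ _ ?U _ _")
    by (rule sandwich[OF carriers(2,4) mat_fl_approx_exact]) simp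
  have V: "mat_fl_approx \<epsilon> (2 * n + 2)
      (fl_mult (e 10) (e 11) (fl_mult (e 8) (e 9) (fl_store (\<lambda>i j. e 6 i j 0) BT) X)
         (fl_store (\<lambda>i j. e 7 i j 0) (transpose_mat BT)))
      (BT * X * transpose_mat BT) (abs_mat BT * abs_mat X * abs_mat (transpose_mat BT))"
    (is "mat_fl_approx _ _ ?V _ _")
    by (rule sandwich[OF carriers(3,5) mat_fl_approx_exact]) simp
  have "mat_fl_approx \<epsilon> (2 * n_h + 4 * n + 7)
      (fl_mult (e 17) (e 18) (fl_mult (e 15) (e 16) (fl_store (\<lambda>i j. e 13 i j 0) AT)
         (fl_hadamard (\<lambda>i j. e 12 i j 0) ?U ?V)) (fl_store (\<lambda>i j. e 14 i j 0) (transpose_mat AT)))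
      (AT * hadamard (G * H * transpose_mat G) (BT * X * transpose_mat BT) * transpose_mat AT)
      (abs_mat AT * hadamard (abs_mat G * abs_mat H * abs_mat (transpose_mat G))
         (abs_mat BT * abs_mat X * abs_mat (transpose_mat BT)) * abs_mat (transpose_mat AT))"
    using carriers e
    by (intro sandwich[where k = n and w = "Suc (2 * n_h + 2 + (2 * n + 2))"]
        mat_fl_approx_fl_hadamard[OF \<open>0 \<le> \<epsilon>\<close> _ U V]) auto
  then show ?thesis
    unfolding tc_Shat_def tc_S_def Let_def n_def AT_def G_def BT_def .
qed

section \<open>The induced 1-norm and the Frobenius norm\<close>

lemma vec_norm1_mult_mat_vec_le:
  assumes "\<And>j. j < dim_col P \<Longrightarrow> (\<Sum>i<dim_row P. \<bar>P $$ (i, j)\<bar>) \<le> c"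
    and "x \<in> carrier_vec (dim_col P)"
  shows "vec_norm1 (P *\<^sub>v x) \<le> c * vec_norm1 x"
proof -
  have "vec_norm1 (P *\<^sub>v x) = (\<Sum>i<dim_row P. \<bar>\<Sum>k<dim_col P. P $$ (i, k) * x $ k\<bar>)"
    unfolding vec_norm1_def using assms(2) by (simp add: scalar_prod_def atLeast0LessThan)
  also have "\<dots> \<le> (\<Sum>i<dim_row P. \<Sum>k<dim_col P. \<bar>P $$ (i, k)\<bar> * \<bar>x $ k\<bar>)"
    by (intro sum_mono order_trans[OF sum_abs]) (simp add: abs_mult)
  also have "\<dots> = (\<Sum>k<dim_col P. (\<Sum>i<dim_row P. \<bar>P $$ (i, k)\<bar>) * \<bar>x $ k\<bar>)"
    by (subst sum.swap) (simp add: sum_distrib_right)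
  also have "\<dots> \<le> (\<Sum>k<dim_col P. c * \<bar>x $ k\<bar>)"
    by (intro sum_mono mult_right_mono assms(1)) auto
  also have "\<dots> = c * vec_norm1 x"
    unfolding vec_norm1_def using assms(2) by (simp add: sum_distrib_left)
  finally show ?thesis .
qed

lemma bdd_above_mat_norm1_set:
  "bdd_above {vec_norm1 (P *\<^sub>v x) | x. x \<in> carrier_vec (dim_col P) \<and> vec_norm1 x \<le> 1}"
proof (rule bdd_aboveI, clarify)
  define c where "c = (\<Sum>j<dim_col P. \<Sum>i<dim_row P. \<bar>P $$ (i, j)\<bar>)"
  fix x :: "real vec"
  assume x: "x \<in> carrier_vec (dim_col P)" "vec_norm1 x \<le> 1"
  have "(\<Sum>i<dim_row P. \<bar>P $$ (i, j)\<bar>) \<le> c" if "j < dim_col P" for j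
    unfolding c_def using that
    by (intro member_le_sum[where f = "\<lambda>j. \<Sum>i<dim_row P. \<bar>P $$ (i, j)\<bar>"]) (auto intro: sum_nonneg)
  then have "vec_norm1 (P *\<^sub>v x) \<le> c * vec_norm1 x"
    using x(1) by (rule vec_norm1_mult_mat_vec_le)
  also have "\<dots> \<le> c"
    using x(2) unfolding c_def by (intro mult_left_le sum_nonneg) auto
  finally show "vec_norm1 (P *\<^sub>v x) \<le> c" .
qed

lemma mat_norm1_nonneg: "0 \<le> mat_norm1 P"
  unfolding mat_norm1_def
proof (rule cSup_upper2[OF _ _ bdd_above_mat_norm1_set])
  show "vec_norm1 (P *\<^sub>v 0\<^sub>v (dim_col P))
      \<in> {vec_norm1 (P *\<^sub>v x) | x. x \<in> carrier_vec (dim_col P) \<and> vec_norm1 x \<le> 1}"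
  proof -
    have "0\<^sub>v (dim_col P) \<in> carrier_vec (dim_col P)" and "vec_norm1 (0\<^sub>v (dim_col P)) \<le> 1"
      by (simp_all add: vec_norm1_def)
    then show ?thesis by blast
  qed
qed (simp add: vec_norm1_def)

lemma mat_norm1_le:
  assumes "\<And>j. j < dim_col P \<Longrightarrow> (\<Sum>i<dim_row P. \<bar>P $$ (i, j)\<bar>) \<le> c" and "0 \<le> c"
  shows "mat_norm1 P \<le> c"
  unfolding mat_norm1_def
proof (rule cSup_least)
  show "{vec_norm1 (P *\<^sub>v x) | x. x \<in> carrier_vec (dim_col P) \<and> vec_norm1 x \<le> 1} \<noteq> {}"
    by (auto intro!: exI[of _ "0\<^sub>v (dim_col P)"] simp: vec_norm1_def)
next
  fix y assume "y \<in> {vec_norm1 (P *\<^sub>v x) | x. x \<in> carrier_vec (dim_col P) \<and> vec_norm1 x \<le> 1}"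
  then obtain x where x: "x \<in> carrier_vec (dim_col P)" "vec_norm1 x \<le> 1"
    and y: "y = vec_norm1 (P *\<^sub>v x)"
    by blast
  have "y \<le> c * vec_norm1 x"
    unfolding y using assms(1) x(1) by (rule vec_norm1_mult_mat_vec_le)
  also have "\<dots> \<le> c"
    using assms(2) x(2) by (simp add: mult_left_le)
  finally show "y \<le> c" .
qed

lemma col_sum_le_mat_norm1:
  assumes "j < dim_col P"
  shows "(\<Sum>i<dim_row P. \<bar>P $$ (i, j)\<bar>) \<le> mat_norm1 P"
  unfolding mat_norm1_def
proof (rule cSup_upper[OF _ bdd_above_mat_norm1_set])
  let ?u = "unit_vec (dim_col P) j :: real vec"
  have "vec_norm1 ?u = 1"
    unfolding vec_norm1_def using assms by (simp add: unit_vec_def if_distrib cong: if_cong)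
  moreover have "vec_norm1 (P *\<^sub>v ?u) = (\<Sum>i<dim_row P. \<bar>P $$ (i, j)\<bar>)"
    unfolding vec_norm1_def using assms by (simp add: scalar_prod_def atLeast0LessThan if_distrib cong: if_cong)
  ultimately show "(\<Sum>i<dim_row P. \<bar>P $$ (i, j)\<bar>)
      \<in> {vec_norm1 (P *\<^sub>v x) | x. x \<in> carrier_vec (dim_col P) \<and> vec_norm1 x \<le> 1}"
    by (metis (mono_tags, lifting) order.refl unit_vec_carrier mem_Collect_eq)
qed

lemma mat_norm1_le_scaled:
  assumes "dim_row E = dim_row D" and "dim_col E = dim_col D" and "0 \<le> c"
    and "\<And>i j. i < dim_row D \<Longrightarrow> j < dim_col D \<Longrightarrow> \<bar>E $$ (i, j)\<bar> \<le> c * \<bar>D $$ (i, j)\<bar>"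
  shows "mat_norm1 E \<le> c * mat_norm1 D"
proof (rule mat_norm1_le)
  fix j assume "j < dim_col E"
  then have "(\<Sum>i<dim_row E. \<bar>E $$ (i, j)\<bar>) \<le> c * (\<Sum>i<dim_row D. \<bar>D $$ (i, j)\<bar>)"
    unfolding sum_distrib_left assms(1) using assms(2-4) by (intro sum_mono) auto
  also have "\<dots> \<le> c * mat_norm1 D"
    using \<open>j < dim_col E\<close> assms by (intro mult_left_mono col_sum_le_mat_norm1) auto
  finally show "(\<Sum>i<dim_row E. \<bar>E $$ (i, j)\<bar>) \<le> c * mat_norm1 D" .
qed (use assms(3) mat_norm1_nonneg in simp)

lemma mat_norm1_abs_mat: "mat_norm1 (abs_mat P) = mat_norm1 P"
  by (intro antisym mat_norm1_le_scaled[where c = 1, simplified]) (auto simp: abs_mat_def)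

lemma mat_norm1_mult_le:
  assumes "dim_col P = dim_row Q"
  shows "mat_norm1 (P * Q) \<le> mat_norm1 P * mat_norm1 Q"
proof (rule mat_norm1_le)
  fix j assume j: "j < dim_col (P * Q)"
  have "(\<Sum>i<dim_row (P * Q). \<bar>(P * Q) $$ (i, j)\<bar>) = vec_norm1 (P *\<^sub>v col Q j)"
    unfolding vec_norm1_def using j by simp
  also have "\<dots> \<le> mat_norm1 P * vec_norm1 (col Q j)"
    using assms by (intro vec_norm1_mult_mat_vec_le col_sum_le_mat_norm1) auto
  also have "\<dots> \<le> mat_norm1 P * mat_norm1 Q"
    using j col_sum_le_mat_norm1[of j Q]
    by (intro mult_left_mono mat_norm1_nonneg) (simp_all add: vec_norm1_def)
  finally show "(\<Sum>i<dim_row (P * Q). \<bar>(P * Q) $$ (i, j)\<bar>) \<le> mat_norm1 P * mat_norm1 Q" .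
qed (intro mult_nonneg_nonneg mat_norm1_nonneg)

lemma sum_mult_square_le:
  fixes f g :: "'a \<Rightarrow> real"
  shows "(\<Sum>i\<in>A. f i * g i)\<^sup>2 \<le> (\<Sum>i\<in>A. (f i)\<^sup>2) * (\<Sum>i\<in>A. (g i)\<^sup>2)"
proof -
  have "\<bar>\<Sum>i\<in>A. f i * g i\<bar> \<le> L2_set f A * L2_set g A"
    using sum_abs[of "\<lambda>i. f i * g i" A] L2_set_mult_ineq[where f = f and g = g and A = A] by (simp add: abs_mult)
  then have "\<bar>\<Sum>i\<in>A. f i * g i\<bar>\<^sup>2 \<le> (L2_set f A * L2_set g A)\<^sup>2"
    by (intro power_mono) auto
  then show ?thesis
    by (simp add: L2_set_def power_mult_distrib sum_nonneg)
qed

lemma frob_nonneg: "0 \<le> frob P"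
  unfolding frob_def by (intro real_sqrt_ge_zero sum_nonneg) auto

lemma frob_abs_mat: "frob (abs_mat P) = frob P"
  unfolding frob_def abs_mat_def by simp

lemma frob_mult_le:
  assumes "dim_col P = dim_row Q"
  shows "frob (P * Q) \<le> frob P * frob Q"
proof -
  have "(\<Sum>i<dim_row P. \<Sum>j<dim_col Q. ((P * Q) $$ (i, j))\<^sup>2)
      \<le> (\<Sum>i<dim_row P. \<Sum>j<dim_col Q. (\<Sum>k<dim_col P. (P $$ (i, k))\<^sup>2) * (\<Sum>k<dim_col P. (Q $$ (k, j))\<^sup>2))"
  proof (intro sum_mono)
    fix i j assume "i \<in> {..<dim_row P}" and "j \<in> {..<dim_col Q}"
    then have "(P * Q) $$ (i, j) = (\<Sum>k<dim_col P. P $$ (i, k) * Q $$ (k, j))"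
      using assms by (intro index_mult_mat_sum) auto
    then show "((P * Q) $$ (i, j))\<^sup>2
        \<le> (\<Sum>k<dim_col P. (P $$ (i, k))\<^sup>2) * (\<Sum>k<dim_col P. (Q $$ (k, j))\<^sup>2)"
      by (simp only: sum_mult_square_le)
  qed
  also have "\<dots> = (\<Sum>i<dim_row P. \<Sum>k<dim_col P. (P $$ (i, k))\<^sup>2) * (\<Sum>k<dim_row Q. \<Sum>j<dim_col Q. (Q $$ (k, j))\<^sup>2)"
    using assms by (simp add: sum_product sum.swap[of _ "{..<dim_col Q}"])
  finally show ?thesis
    unfolding frob_def by (simp add: real_sqrt_mult[symmetric])
qed

lemma mat_norm1_hadamard_le:
  assumes "dim_row P = dim_row Q" and "dim_col P = dim_col Q"
  shows "mat_norm1 (hadamard P Q) \<le> frob P * frob Q"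
proof (rule mat_norm1_le)
  fix l assume l: "l < dim_col (hadamard P Q)"
  have column_le_frob: "L2_set (\<lambda>k. R $$ (k, l)) {..<dim_row R} \<le> frob R"
    if "l < dim_col R" for R :: "real mat"
    unfolding frob_def L2_set_def using that
    by (intro real_sqrt_le_mono sum_mono member_le_sum[where f = "\<lambda>j. (R $$ (_, j))\<^sup>2"]) auto
  have "(\<Sum>k<dim_row (hadamard P Q). \<bar>hadamard P Q $$ (k, l)\<bar>)
      = (\<Sum>k<dim_row P. \<bar>P $$ (k, l)\<bar> * \<bar>Q $$ (k, l)\<bar>)"
    using l by (simp add: hadamard_def abs_mult)
  also have "\<dots> \<le> L2_set (\<lambda>k. P $$ (k, l)) {..<dim_row P} * L2_set (\<lambda>k. Q $$ (k, l)) {..<dim_row Q}"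
    using assms L2_set_mult_ineq by simp
  also have "\<dots> \<le> frob P * frob Q"
    using l assms by (intro mult_mono column_le_frob frob_nonneg) auto
  finally show "(\<Sum>k<dim_row (hadamard P Q). \<bar>hadamard P Q $$ (k, l)\<bar>) \<le> frob P * frob Q" .
qed (intro mult_nonneg_nonneg frob_nonneg)

lemma mat_norm1_abs_sandwich_hadamard_le:
  assumes "A1 \<in> carrier_mat r n" and "A2 \<in> carrier_mat n r'"
    and "G1 \<in> carrier_mat n h" and "H \<in> carrier_mat h h'" and "G2 \<in> carrier_mat h' n"
    and "B1 \<in> carrier_mat n k" and "X \<in> carrier_mat k k'" and "B2 \<in> carrier_mat k' n"
  shows "mat_norm1 (abs_mat A1 * hadamard (abs_mat G1 * abs_mat H * abs_mat G2)
                                            (abs_mat B1 * abs_mat X * abs_mat B2) * abs_mat A2)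
    \<le> mat_norm1 A1 * frob G1 * frob H * frob G2 * frob B1 * frob X * frob B2 * mat_norm1 A2"
proof -
  have frob_triple: "frob (abs_mat P * abs_mat Q * abs_mat R) \<le> frob P * frob Q * frob R"
    if "dim_col P = dim_row Q" and "dim_col Q = dim_row R" for P Q R :: "real mat"
  proof -
    have "frob (abs_mat P * abs_mat Q * abs_mat R) \<le> frob (abs_mat P * abs_mat Q) * frob (abs_mat R)"
      using that by (intro frob_mult_le) (simp add: abs_mat_def)
    also have "\<dots> \<le> frob (abs_mat P) * frob (abs_mat Q) * frob (abs_mat R)"
      using that by (intro mult_right_mono frob_mult_le frob_nonneg) (simp add: abs_mat_def)
    finally show ?thesis by (simp add: frob_abs_mat)
  qed
  let ?M = "hadamard (abs_mat G1 * abs_mat H * abs_mat G2) (abs_mat B1 * abs_mat X * abs_mat B2)"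
  have "mat_norm1 ?M \<le> (frob G1 * frob H * frob G2) * (frob B1 * frob X * frob B2)"
    using assms
    by (intro order_trans[OF mat_norm1_hadamard_le] mult_mono frob_triple frob_nonneg mult_nonneg_nonneg)
      (simp_all add: abs_mat_def)
  then have M: "mat_norm1 ?M \<le> frob G1 * frob H * frob G2 * frob B1 * frob X * frob B2"
    by (simp add: mult_ac)
  have "mat_norm1 (abs_mat A1 * ?M * abs_mat A2) \<le> mat_norm1 (abs_mat A1 * ?M) * mat_norm1 (abs_mat A2)"
    using assms by (intro mat_norm1_mult_le) (simp add: abs_mat_def)
  also have "\<dots> \<le> mat_norm1 (abs_mat A1) * mat_norm1 ?M * mat_norm1 (abs_mat A2)"
    using assms
    by (intro mult_right_mono mat_norm1_mult_le mat_norm1_nonneg) (simp add: abs_mat_def)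
  also have "\<dots> \<le> mat_norm1 A1 * (frob G1 * frob H * frob G2 * frob B1 * frob X * frob B2) * mat_norm1 A2"
    unfolding mat_norm1_abs_mat using M by (intro mult_right_mono mult_left_mono mat_norm1_nonneg)
  finally show ?thesis by (simp add: mult_ac)
qed

lemma mat_fl_approx_entry_le:
  assumes "mat_fl_approx \<epsilon> m Yh Y D" and "0 \<le> \<epsilon>" and "\<epsilon> \<le> 1"
    and "i < dim_row Y" and "j < dim_col Y"
  shows "\<bar>Yh $$ (i, j) - Y $$ (i, j)\<bar> \<le> D $$ (i, j) * (real m * \<epsilon>) + mat_norm1 D * 4 ^ m * \<epsilon>\<^sup>2"
proof -
  have approx: "fl_approx \<epsilon> m (Yh $$ (i, j)) (Y $$ (i, j)) (D $$ (i, j))"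
    using assms(1,4,5) unfolding mat_fl_approx_def by blast
  have "D $$ (i, j) \<le> (\<Sum>i'<dim_row D. \<bar>D $$ (i', j)\<bar>)"
    using assms(1,4) unfolding mat_fl_approx_def
    by (intro order_trans[OF abs_ge_self member_le_sum[where f = "\<lambda>i'. \<bar>D $$ (i', j)\<bar>"]]) auto
  also have "\<dots> \<le> mat_norm1 D"
    using assms(1,5) unfolding mat_fl_approx_def by (intro col_sum_le_mat_norm1) simp
  finally have "D $$ (i, j) * (4 ^ m * \<epsilon>\<^sup>2) \<le> mat_norm1 D * (4 ^ m * \<epsilon>\<^sup>2)"
    by (intro mult_right_mono) simp_all
  with fl_approx_first_order[OF approx assms(2,3)] show ?thesis
    by (simp add: algebra_simps)
qed

lemma mat_norm1_mat_fl_approx_le: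
  assumes "mat_fl_approx \<epsilon> m Yh Y D" and "0 \<le> \<epsilon>" and "\<epsilon> \<le> 1" and "mat_norm1 D \<le> K"
  shows "mat_norm1 (Yh - Y) \<le> K * (real m * \<epsilon>) + mat_norm1 D * 4 ^ m * \<epsilon>\<^sup>2"
proof -
  have "mat_norm1 (Yh - Y) \<le> (real m * \<epsilon> + 4 ^ m * \<epsilon>\<^sup>2) * mat_norm1 D"
  proof (rule mat_norm1_le_scaled)
    fix i j assume ij: "i < dim_row D" "j < dim_col D"
    then have approx: "fl_approx \<epsilon> m (Yh $$ (i, j)) (Y $$ (i, j)) (D $$ (i, j))"
      using assms(1) unfolding mat_fl_approx_def by auto
    then have "0 \<le> D $$ (i, j)"
      unfolding fl_approx_def by linarith
    moreover have "(Yh - Y) $$ (i, j) = Yh $$ (i, j) - Y $$ (i, j)"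
      using ij assms(1) unfolding mat_fl_approx_def by simp
    ultimately show "\<bar>(Yh - Y) $$ (i, j)\<bar> \<le> (real m * \<epsilon> + 4 ^ m * \<epsilon>\<^sup>2) * \<bar>D $$ (i, j)\<bar>"
      using fl_approx_first_order[OF approx assms(2,3)] by (simp add: mult.commute)
  qed (use assms in \<open>auto simp: mat_fl_approx_def\<close>)
  also have "\<dots> \<le> K * (real m * \<epsilon>) + mat_norm1 D * 4 ^ m * \<epsilon>\<^sup>2"
    using mult_right_mono[OF assms(4), of "real m * \<epsilon>"] assms(2) by (simp add: algebra_simps)
  finally show ?thesis .
qed

theorem mainTheorem4:
  fixes n_o n_h :: nat and p :: "nat \<Rightarrow> real" and H X :: "real mat"
  assumes "n_o \<ge> 1" and "n_h \<ge> 1"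
    and "inj_on p {0..<tc_n n_o n_h}"
    and "H \<in> carrier_mat n_h n_h"
    and "X \<in> carrier_mat (tc_n n_o n_h) (tc_n n_o n_h)"
  shows "\<exists>C \<epsilon>0. \<epsilon>0 > 0 \<and>
    (\<forall>\<epsilon> e. 0 \<le> \<epsilon> \<and> \<epsilon> \<le> \<epsilon>0 \<and> (\<forall>t i j k. \<bar>e t i j k\<bar> \<le> \<epsilon>) \<longrightarrow>
      (let n = tc_n n_o n_h; AT = tc_AT n_o n_h p; G = tc_G n_o n_h p; BT = tc_BT n_o n_h p;
           S = tc_S n_o n_h p H X; Shat = tc_Shat n_o n_h p H X e;
           c = real (2 * n_h + 4 * n + 7) * \<epsilon>
       in (\<forall>i<n_o. \<forall>j<n_o.
             \<bar>Shat $$ (i,j) - S $$ (i,j)\<bar> \<le>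
               (abs_mat AT *
                 hadamard (abs_mat G * abs_mat H * abs_mat (transpose_mat G))
                          (abs_mat BT * abs_mat X * abs_mat (transpose_mat BT))
                 * abs_mat (transpose_mat AT)) $$ (i,j) * c + C * \<epsilon>\<^sup>2)
          \<and> mat_norm1 (Shat - S) \<le>
              mat_norm1 AT * frob G * frob H * frob (transpose_mat G) * frob BT * frob X
                * frob (transpose_mat BT) * mat_norm1 (transpose_mat AT) * c + C * \<epsilon>\<^sup>2))"
proof -
  define AT G BT where "AT = tc_AT n_o n_h p" and "G = tc_G n_o n_h p" and "BT = tc_BT n_o n_h p"
  define N where "N = 2 * n_h + 4 * tc_n n_o n_h + 7"
  define D where "D = abs_mat AT * hadamard (abs_mat G * abs_mat H * abs_mat (transpose_mat G))
    (abs_mat BT * abs_mat X * abs_mat (transpose_mat BT)) * abs_mat (transpose_mat AT)"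
  define K where "K = mat_norm1 AT * frob G * frob H * frob (transpose_mat G) * frob BT * frob X
    * frob (transpose_mat BT) * mat_norm1 (transpose_mat AT)"
  have carriers: "AT \<in> carrier_mat n_o (tc_n n_o n_h)" "G \<in> carrier_mat (tc_n n_o n_h) n_h"
    "BT \<in> carrier_mat (tc_n n_o n_h) (tc_n n_o n_h)"
    unfolding AT_def G_def BT_def by (rule tc_AT_carrier tc_G_carrier tc_BT_carrier)+
  have "mat_norm1 D \<le> K"
    unfolding D_def K_def using carriers assms(4,5)
    by (intro mat_norm1_abs_sandwich_hadamard_le[where n = "tc_n n_o n_h"]) auto
  have approx: "mat_fl_approx \<epsilon> N (tc_Shat n_o n_h p H X e) (tc_S n_o n_h p H X) D"
    if "0 \<le> \<epsilon>" and "\<forall>t i j k. \<bar>e t i j k\<bar> \<le> \<epsilon>" for \<epsilon> e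
    unfolding N_def D_def AT_def G_def BT_def using assms(4,5) that
    by (intro mat_fl_approx_tc_Shat) auto
  have "dim_row (tc_S n_o n_h p H X) = n_o" and "dim_col (tc_S n_o n_h p H X) = n_o"
    unfolding tc_S_def Let_def AT_def[symmetric] G_def[symmetric] BT_def[symmetric]
    using carriers by simp_all
  then show ?thesis
    unfolding Let_def AT_def[symmetric] G_def[symmetric] BT_def[symmetric] N_def[symmetric]
      D_def[symmetric] K_def[symmetric]
    using mat_fl_approx_entry_le[OF approx] mat_norm1_mat_fl_approx_le[OF approx _ _ \<open>mat_norm1 D \<le> K\<close>]
    by (intro exI[of _ "mat_norm1 D * 4 ^ N"] exI[of _ "1::real"]) auto
qed

end
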